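(* Let $N>1$, $d\ge1$, $m\ge1$, and let $f:\mathbb{R}^{N\times d}\times\mathbb{R}^{N\times 3}\to\mathbb{R}^m$ be $\mathrm{O}(3)$-invariant ($f(s,\vec r o^T)=f(s,\vec r)$ for all $o\in\mathrm{O}(3)$), translation-invariant ($f(s,\vec r+\mathbf 1t)=f(s,\vec r)$ for all $t\in\mathbb{R}^{1\times 3}$) and permutation-invariant ($f(\pi(s),\pi(\vec r))=f(s,\vec r)$ for all $\pi\in S_N$). Let $g$ be as in the context and, for a molecule $(s,\vec r)$, let $z_1(s,\vec r)=\rho\big(\sum_{j=1}^N\varphi(\mathrm{Concatenate}(\vec r_{1j}\vec E_1^T,\tilde s_j))\big)$ with $\vec E_1=g(\mathrm{LE}_1)$. Then there exist functions $\varphi,\rho$ and $h$ (with $h$ taking values in $\mathbb{R}^m$) such that the map $(s,\vec r)\mapsto\frac{1}{N!}\sum_{\pi\in S_N}h\big(z_1(\pi(s),\pi(\vec r))\big)$ is permutation-invariant and equals $f(s,\vec r)$ for all $(s,\vec r)$.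
   Context: For a molecule with features $s\in\mathbb{R}^{N\times d}$ (row $s_j$) and coordinates $\vec r\in\mathbb{R}^{N\times 3}$ (row $\vec r_j$), set $\vec r_{ij}=\vec r_i-\vec r_j$, node identity features $\tilde s_j=\mathrm{Concatenate}(s_j,j)\in\mathbb{R}^{d+1}$ and $\mathrm{LE}_i=\{(\tilde s_j,\vec r_{ij}): j=1,\dots,N\}$. $\mathbf 1\in\mathbb{R}^{N\times1}$ is the all-ones column. $S_N$ is the group of permutations of $\{1,\dots,N\}$; for a matrix $M$ with $N$ rows and $\pi\in S_N$, $\pi(M)$ is the matrix whose $i$-th row is the $\pi^{-1}(i)$-th row of $M$. $\mathrm{O}(3)=\{Q\in\mathbb{R}^{3\times3}:QQ^T=I\}$. The function $g$ maps such local environments to $\mathbb{R}^{3\times3}$, satisfies $g(\{(\tilde s_j,\vec r_{ij}o^T)\}_j)=g(\{(\tilde s_j,\vec r_{ij})\}_j)o^T$ for all $o\in\mathrm{O}(3)$, and for every molecule and $i$ the matrix $\vec E_i=g(\mathrm{LE}_i)$, with $k=\mathrm{rank}(\vec E_i)$, has its first $k$ rows forming an orthonormal basis of $\mathrm{span}\{\vec r_{ij}:j\}$ and its remaining rows zero. *)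

theory Defs
  imports "HOL-Analysis.Analysis"
begin

text \<open>A molecule with N atoms: rows are indexed by 1..N (nat); the matrices
  s (N x d) and r (N x 3) are functions on nat, required to vanish outside 1..N.\<close>

definition wf_mol :: "nat \<Rightarrow> (nat \<Rightarrow> real^'d) \<Rightarrow> (nat \<Rightarrow> real^3) \<Rightarrow> bool" where
  "wf_mol N s r \<longleftrightarrow> (\<forall>k. k \<notin> {1..N} \<longrightarrow> s k = 0 \<and> r k = 0)"

definition O3 :: "(real^3^3) set" where
  "O3 = {Q. Q ** transpose Q = mat 1}"

definition perm_rows :: "(nat \<Rightarrow> nat) \<Rightarrow> (nat \<Rightarrow> 'a) \<Rightarrow> (nat \<Rightarrow> 'a)" where
  "perm_rows \<pi> M = (\<lambda>i. M (inv \<pi> i))"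

text \<open>r o^T: each row vector r_j becomes r_j o^T, i.e. the column vector o r_j.\<close>
definition rot_rows :: "real^3^3 \<Rightarrow> (nat \<Rightarrow> real^3) \<Rightarrow> (nat \<Rightarrow> real^3)" where
  "rot_rows Q r = (\<lambda>j. Q *v r j)"

definition transl_rows :: "nat \<Rightarrow> real^3 \<Rightarrow> (nat \<Rightarrow> real^3) \<Rightarrow> (nat \<Rightarrow> real^3)" where
  "transl_rows N t r = (\<lambda>j. if j \<in> {1..N} then r j + t else r j)"

definition tilde :: "(nat \<Rightarrow> real^'d) \<Rightarrow> nat \<Rightarrow> (real^'d) \<times> real" where
  "tilde s j = (s j, real j)"

definition LE :: "nat \<Rightarrow> (nat \<Rightarrow> real^'d) \<Rightarrow> (nat \<Rightarrow> real^3) \<Rightarrow> nat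
                   \<Rightarrow> (((real^'d) \<times> real) \<times> (real^3)) set" where
  "LE N s r i = {(tilde s j, r i - r j) | j. j \<in> {1..N}}"

definition rows3 :: "real^3^3 \<Rightarrow> (real^3) list" where
  "rows3 E = [E $ 1, E $ 2, E $ 3]"

definition frame_ok :: "real^3^3 \<Rightarrow> (real^3) set \<Rightarrow> bool" where
  "frame_ok E V \<longleftrightarrow>
     (let k = rank E; rs = rows3 E in
       (\<forall>a<k. \<forall>b<k. (rs ! a) \<bullet> (rs ! b) = (if a = b then 1 else 0)) \<and>
       span (set (take k rs)) = span V \<and>
       (\<forall>v \<in> set (drop k rs). v = 0))"

text \<open>Row vector r_1j E_1^T is the column vector E_1 r_1j. Latent vectors are
  nat-indexed real vectors (nat => real), summed componentwise.\<close>
definition z1 :: "nat \<Rightarrow> ((((real^'d) \<times> real) \<times> (real^3)) set \<Rightarrow> real^3^3)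
      \<Rightarrow> ((real^3) \<times> ((real^'d) \<times> real) \<Rightarrow> (nat \<Rightarrow> real))
      \<Rightarrow> ((nat \<Rightarrow> real) \<Rightarrow> (nat \<Rightarrow> real))
      \<Rightarrow> (nat \<Rightarrow> real^'d) \<Rightarrow> (nat \<Rightarrow> real^3) \<Rightarrow> (nat \<Rightarrow> real)" where
  "z1 N g \<phi> \<rho> s r =
     \<rho> (\<lambda>c. \<Sum>j\<in>{1..N}. \<phi> (g (LE N s r 1) *v (r 1 - r j), tilde s j) c)"

end

theory Submission
  imports Defs "HOL-Analysis.Cross3" "HOL-Library.Nat_Bijection" "HOL-Library.Countable"
begin

text \<open>Since \<open>\<phi>\<close> sees the index \<open>j\<close> inside \<open>s\<^sub>j\<close>, it can write the data of atom \<open>j\<close> into coordinates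
  reserved for \<open>j\<close>; the sum in \<open>z\<^sub>1\<close> then loses nothing, \<open>h\<close> decodes it and applies \<open>f\<close>, so
  \<open>h \<circ> z\<^sub>1 = f\<close> and the average over permutations is that of a constant.\<close>

unbundle cross3_syntax

lemma matrix_vector_mult_uminus: "(- (Q::real^'n^'m)) *v x = - (Q *v x)"
  by (simp add: vec_eq_iff matrix_vector_mult_def sum_negf)

lemma uminus_in_O3:
  assumes "Q \<in> O3"
  shows "- Q \<in> O3"
proof -
  have "(- Q) ** transpose (- Q) = Q ** transpose Q"
    by (simp add: vec_eq_iff matrix_matrix_mult_def transpose_def)
  with assms show ?thesis
    by (simp add: O3_def)
qed

lemma vector_rows_in_O3:
  fixes a b c :: "real^3"
  assumes "a \<bullet> a = 1" "b \<bullet> b = 1" "c \<bullet> c = 1" "a \<bullet> b = 0" "a \<bullet> c = 0" "b \<bullet> c = 0"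
  shows "(vector [a, b, c] :: real^3^3) \<in> O3"
proof -
  have entry: "(A ** transpose A) $ i $ j = A $ i \<bullet> A $ j" for A :: "real^3^3" and i j
    by (simp add: matrix_matrix_mult_def transpose_def inner_vec_def mult.commute)
  have "(vector [a, b, c] ** transpose (vector [a, b, c])) $ i $ j = mat 1 $ i $ j" for i j :: 3
    unfolding entry using exhaust_3[of i] exhaust_3[of j] assms
    by (auto simp: mat_def inner_commute)
  then show ?thesis
    by (simp add: vec_eq_iff O3_def)
qed

lemma matrix3_eq_vector_rows: "(A::real^3^3) = vector [A $ 1, A $ 2, A $ 3]"
proof -
  have "A $ i = vector [A $ 1, A $ 2, A $ 3] $ i" for i
    using exhaust_3[of i] by auto
  then show ?thesis
    by (simp add: vec_eq_iff)
qed

lemma vector_rows_mult: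
  fixes a b c x :: "real^3"
  shows "(vector [a, b, c] :: real^3^3) *v x = vector [a \<bullet> x, b \<bullet> x, c \<bullet> x]"
proof -
  have "(vector [a, b, c] *v x) $ i = vector [a \<bullet> x, b \<bullet> x, c \<bullet> x] $ i" for i :: 3
    using exhaust_3[of i] by (auto simp: matrix_vector_mul_component)
  then show ?thesis
    by (simp add: vec_eq_iff)
qed

lemma orthonormal_pair_O3_completion:
  fixes a b :: "real^3"
  assumes "a \<bullet> a = 1" "b \<bullet> b = 1" "a \<bullet> b = 0"
  obtains Q where "Q \<in> O3" "\<And>x. x \<in> span {a, b} \<Longrightarrow> Q *v x = vector [a \<bullet> x, b \<bullet> x, 0]"
proof (rule that[of "vector [a, b, a \<times> b]"])
  have "(a \<times> b) \<bullet> (a \<times> b) = 1"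
    using norm_cross[of a b] assms by (simp add: power2_norm_eq_inner)
  with assms show "vector [a, b, a \<times> b] \<in> O3"
    by (intro vector_rows_in_O3) (simp_all add: dot_cross_self)
next
  fix x :: "real^3"
  assume "x \<in> span {a, b}"
  then have "orthogonal (a \<times> b) x"
    by (rule orthogonal_to_span) (auto simp: orthogonal_def dot_cross_self)
  then show "(vector [a, b, a \<times> b] :: real^3^3) *v x = vector [a \<bullet> x, b \<bullet> x, 0]"
    unfolding vector_rows_mult orthogonal_def by simp
qed

lemma unit_orthogonal_exists:
  fixes a :: "real^3"
  obtains u where "u \<bullet> u = 1" "a \<bullet> u = 0"
proof -
  obtain y :: "real^3" where "y \<noteq> 0" "orthogonal a y"
    using orthogonal_to_vector_exists[of a] by auto
  then show thesis
    by (intro that[of "y /\<^sub>R norm y"])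
       (auto simp: orthogonal_def power2_norm_eq_inner[symmetric] power2_eq_square)
qed

lemma unit_vector_O3_completion:
  fixes a :: "real^3"
  assumes "a \<bullet> a = 1"
  obtains Q where "Q \<in> O3" "\<And>x. x \<in> span {a} \<Longrightarrow> Q *v x = vector [a \<bullet> x, 0, 0]"
proof -
  obtain u where u: "u \<bullet> u = 1" "a \<bullet> u = 0"
    using unit_orthogonal_exists .
  obtain Q where "Q \<in> O3" and Q: "\<And>x. x \<in> span {a, u} \<Longrightarrow> Q *v x = vector [a \<bullet> x, u \<bullet> x, 0]"
    using orthonormal_pair_O3_completion[OF assms u] by blast
  have "Q *v x = vector [a \<bullet> x, 0, 0]" if x: "x \<in> span {a}" for x
  proof -
    have "u \<bullet> x = 0"
      using orthogonal_to_span[OF x, of u] u by (auto simp: orthogonal_def inner_commute)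
    moreover have "x \<in> span {a, u}"
      using x span_mono[of "{a}" "{a, u}"] by blast
    ultimately show ?thesis
      using Q by simp
  qed
  with \<open>Q \<in> O3\<close> show thesis
    using that by blast
qed

lemma frame_ok_agrees_with_O3:
  assumes "frame_ok E V"
  obtains Q where "Q \<in> O3" "\<And>x. x \<in> V \<Longrightarrow> Q *v x = E *v x"
proof -
  define e1 e2 e3 where "e1 = E $ 1" and "e2 = E $ 2" and "e3 = E $ 3"
  have E: "E = vector [e1, e2, e3]"
    unfolding e1_def e2_def e3_def by (rule matrix3_eq_vector_rows)
  have frame: "\<And>a b. a < rank E \<Longrightarrow> b < rank E \<Longrightarrow>
                 [e1, e2, e3] ! a \<bullet> [e1, e2, e3] ! b = (if a = b then 1 else 0)"
    "span (set (take (rank E) [e1, e2, e3])) = span V"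
    "\<forall>v \<in> set (drop (rank E) [e1, e2, e3]). v = 0"
    using assms unfolding frame_ok_def Let_def rows3_def e1_def e2_def e3_def by auto
  have V: "x \<in> span (set (take (rank E) [e1, e2, e3]))" if "x \<in> V" for x
    using frame(2) that span_base by blast
  consider "rank E = 0" | "rank E = 1" | "rank E = 2" | "rank E = 3"
    using rank_bound[of E] by (simp add: le_Suc_eq numeral_3_eq_3 numeral_2_eq_2) linarith
  then show thesis
  proof cases
    case 1
    then have "mat 1 *v x = E *v x" if "x \<in> V" for x
      using V[OF that] by simp
    then show thesis
      by (intro that[of "mat 1"]) (auto simp: O3_def)
  next
    case 2
    then have e1: "e1 \<bullet> e1 = 1" and "e2 = 0" "e3 = 0"
      using frame(1)[of 0 0] frame(3) by auto
    obtain Q where "Q \<in> O3" and Q: "\<And>x. x \<in> span {e1} \<Longrightarrow> Q *v x = vector [e1 \<bullet> x, 0, 0]"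
      using unit_vector_O3_completion[OF e1] by blast
    have "Q *v x = E *v x" if "x \<in> V" for x
      using V[OF that] 2 Q by (simp add: E vector_rows_mult \<open>e2 = 0\<close> \<open>e3 = 0\<close>)
    with \<open>Q \<in> O3\<close> show thesis
      using that by blast
  next
    case 3
    then have e12: "e1 \<bullet> e1 = 1" "e2 \<bullet> e2 = 1" "e1 \<bullet> e2 = 0" and "e3 = 0"
      using frame(1)[of 0 0] frame(1)[of 1 1] frame(1)[of 0 1] frame(3)
      by (auto simp: numeral_2_eq_2)
    obtain Q where "Q \<in> O3" and Q: "\<And>x. x \<in> span {e1, e2} \<Longrightarrow> Q *v x = vector [e1 \<bullet> x, e2 \<bullet> x, 0]"
      using orthonormal_pair_O3_completion[OF e12] by blast
    have "Q *v x = E *v x" if "x \<in> V" for x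
      using V[OF that] 3 Q by (simp add: E vector_rows_mult \<open>e3 = 0\<close> numeral_2_eq_2)
    with \<open>Q \<in> O3\<close> show thesis
      using that by blast
  next
    case 4
    then have "e1 \<bullet> e1 = 1" "e2 \<bullet> e2 = 1" "e3 \<bullet> e3 = 1"
      "e1 \<bullet> e2 = 0" "e1 \<bullet> e3 = 0" "e2 \<bullet> e3 = 0"
      using frame(1)[of 0 0] frame(1)[of 1 1] frame(1)[of 2 2]
        frame(1)[of 0 1] frame(1)[of 0 2] frame(1)[of 1 2] by auto
    with vector_rows_in_O3 E show thesis
      using that by metis
  qed
qed

lemma rigid_invariant_eq_frame_coordinates:
  fixes f :: "(nat \<Rightarrow> real^'d) \<Rightarrow> (nat \<Rightarrow> real^3) \<Rightarrow> 'b"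
  assumes f_O3: "\<And>s r Q. wf_mol N s r \<Longrightarrow> Q \<in> O3 \<Longrightarrow> f s (rot_rows Q r) = f s r"
    and f_transl: "\<And>s r t. wf_mol N s r \<Longrightarrow> f s (transl_rows N t r) = f s r"
    and wf: "wf_mol N s r"
    and frame: "frame_ok E {r i - r j | j. j \<in> {1..N}}"
  shows "f s r = f s (\<lambda>j. if j \<in> {1..N} then E *v (r i - r j) else 0)"
proof -
  obtain Q where Q: "Q \<in> O3" and QE: "\<And>x. x \<in> {r i - r j | j. j \<in> {1..N}} \<Longrightarrow> Q *v x = E *v x"
    using frame_ok_agrees_with_O3[OF frame] by blast
  have wf_rot: "wf_mol N s (rot_rows (- Q) r)"
    using wf by (simp add: wf_mol_def rot_rows_def)
  \<comment> \<open>rotating by \<open>-Q\<close> and translating by \<open>Q r\<^sub>i\<close> moves atom \<open>j\<close> to \<open>Q (r\<^sub>i - r\<^sub>j)\<close>\<close>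
  have "transl_rows N (Q *v r i) (rot_rows (- Q) r) = (\<lambda>j. if j \<in> {1..N} then E *v (r i - r j) else 0)"
  proof
    fix j
    show "transl_rows N (Q *v r i) (rot_rows (- Q) r) j = (if j \<in> {1..N} then E *v (r i - r j) else 0)"
    proof (cases "j \<in> {1..N}")
      case True
      then have "Q *v (r i - r j) = E *v (r i - r j)"
        by (intro QE) blast
      with True show ?thesis
        by (simp add: transl_rows_def rot_rows_def matrix_vector_mult_diff_distrib matrix_vector_mult_uminus)
    next
      case False
      then have "r j = 0"
        using wf by (simp add: wf_mol_def)
      with False show ?thesis
        by (auto simp: transl_rows_def rot_rows_def)
    qed
  qed
  moreover have "f s r = f s (transl_rows N (Q *v r i) (rot_rows (- Q) r))"
    using f_O3[OF wf uminus_in_O3[OF Q]] f_transl[OF wf_rot] by simp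
  ultimately show ?thesis
    by simp
qed

definition interleave :: "real^'a \<Rightarrow> real^'b \<Rightarrow> nat \<Rightarrow> real" where
  "interleave v x q = (if even q then v $ from_nat (q div 2) else x $ from_nat (q div 2))"

definition atom_embedding :: "(real^3) \<times> ((real^'d) \<times> real) \<Rightarrow> nat \<Rightarrow> real" where
  "atom_embedding = (\<lambda>(v, x, t) c. case prod_decode c of (a, q) \<Rightarrow>
     if t = real a then interleave v x q else 0)"

definition decode_features :: "nat \<Rightarrow> (nat \<Rightarrow> real) \<Rightarrow> nat \<Rightarrow> real^'d" where
  "decode_features N z a =
     (if a \<in> {1..N} then (\<chi> i. z (prod_encode (a, 2 * to_nat i + 1))) else 0)"

definition decode_positions :: "nat \<Rightarrow> (nat \<Rightarrow> real) \<Rightarrow> nat \<Rightarrow> real^3" where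
  "decode_positions N z a =
     (if a \<in> {1..N} then (\<chi> i. z (prod_encode (a, 2 * to_nat i))) else 0)"

lemma sum_atom_embedding:
  "(\<Sum>j\<in>{1..N}. atom_embedding (v j, tilde s j) (prod_encode (a, q)))
     = (if a \<in> {1..N} then interleave (v a) (s a) q else 0)"
proof -
  have "(\<Sum>j\<in>{1..N}. atom_embedding (v j, tilde s j) (prod_encode (a, q)))
      = (\<Sum>j\<in>{1..N}. if j = a then interleave (v j) (s j) q else 0)"
    by (rule sum.cong) (auto simp: atom_embedding_def tilde_def)
  then show ?thesis
    by simp
qed

lemma decode_sum_atom_embedding:
  fixes N :: nat and v :: "nat \<Rightarrow> real^3" and s :: "nat \<Rightarrow> real^'d"
  defines "z \<equiv> \<lambda>c. \<Sum>j\<in>{1..N}. atom_embedding (v j, tilde s j) c"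
  shows "decode_features N z = (\<lambda>a. if a \<in> {1..N} then s a else 0)"
    and "decode_positions N z = (\<lambda>a. if a \<in> {1..N} then v a else 0)"
  unfolding decode_features_def decode_positions_def z_def sum_atom_embedding
  by (auto simp: interleave_def vec_eq_iff)

lemma decode_z1:
  assumes "wf_mol N s r"
  shows "decode_features N (z1 N g atom_embedding id s r) = s"
    and "decode_positions N (z1 N g atom_embedding id s r)
           = (\<lambda>j. if j \<in> {1..N} then g (LE N s r 1) *v (r 1 - r j) else 0)"
  using assms unfolding z1_def id_def decode_sum_atom_embedding by (auto simp: wf_mol_def)

lemma wf_mol_perm_rows:
  assumes "wf_mol N s r" "\<pi> permutes {1..N}"
  shows "wf_mol N (perm_rows \<pi> s) (perm_rows \<pi> r)"
proof -
  have "inv \<pi> k = k" if "k \<notin> {1..N}" for k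
    using permutes_inv[OF assms(2)] that by (simp add: permutes_not_in)
  then show ?thesis
    using assms(1) by (auto simp: wf_mol_def perm_rows_def)
qed

lemma average_over_permutations_const:
  fixes G :: "(nat \<Rightarrow> nat) \<Rightarrow> 'a::real_vector"
  assumes "\<And>\<pi>. \<pi> permutes {1..n} \<Longrightarrow> G \<pi> = c"
  shows "(1 / fact n) *\<^sub>R (\<Sum>\<pi>\<in>{\<pi>. \<pi> permutes {1..n}}. G \<pi>) = c"
proof -
  have "card {\<pi>. \<pi> permutes {1..n}} = fact n"
    by (rule card_permutations) auto
  then have "(\<Sum>\<pi>\<in>{\<pi>. \<pi> permutes {1..n}}. G \<pi>) = fact n *\<^sub>R c"
    using assms by (simp add: sum_constant_scaleR of_nat_fact)
  then show ?thesis
    by simp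
qed

theorem proposition8:
  fixes N :: nat
    and f :: "(nat \<Rightarrow> real^'d) \<Rightarrow> (nat \<Rightarrow> real^3) \<Rightarrow> real^'m"
    and g :: "(((real^'d) \<times> real) \<times> (real^3)) set \<Rightarrow> real^3^3"
  assumes N: "N > 1"
    and f_O3: "\<And>s r Q. wf_mol N s r \<Longrightarrow> Q \<in> O3 \<Longrightarrow> f s (rot_rows Q r) = f s r"
    and f_transl: "\<And>s r t. wf_mol N s r \<Longrightarrow> f s (transl_rows N t r) = f s r"
    and f_perm: "\<And>s r \<pi>. wf_mol N s r \<Longrightarrow> \<pi> permutes {1..N} \<Longrightarrow>
                   f (perm_rows \<pi> s) (perm_rows \<pi> r) = f s r"
    and g_equiv: "\<And>s r i Q. wf_mol N s r \<Longrightarrow> i \<in> {1..N} \<Longrightarrow> Q \<in> O3 \<Longrightarrow>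
                   g {(tilde s j, Q *v (r i - r j)) | j. j \<in> {1..N}} = g (LE N s r i) ** transpose Q"
    and g_frame: "\<And>s r i. wf_mol N s r \<Longrightarrow> i \<in> {1..N} \<Longrightarrow>
                   frame_ok (g (LE N s r i)) {r i - r j | j. j \<in> {1..N}}"
  shows "\<exists>(\<phi> :: (real^3) \<times> ((real^'d) \<times> real) \<Rightarrow> (nat \<Rightarrow> real))
           (\<rho> :: (nat \<Rightarrow> real) \<Rightarrow> (nat \<Rightarrow> real))
           (h :: (nat \<Rightarrow> real) \<Rightarrow> real^'m).
     (let F = (\<lambda>s r. (1 / fact N) *\<^sub>R
                (\<Sum>\<pi>\<in>{\<pi>. \<pi> permutes {1..N}}. h (z1 N g \<phi> \<rho> (perm_rows \<pi> s) (perm_rows \<pi> r))))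
      in (\<forall>s r \<pi>. wf_mol N s r \<longrightarrow> \<pi> permutes {1..N} \<longrightarrow>
            F (perm_rows \<pi> s) (perm_rows \<pi> r) = F s r)
       \<and> (\<forall>s r. wf_mol N s r \<longrightarrow> F s r = f s r))"
proof -
  define h where "h z = f (decode_features N z) (decode_positions N z)" for z
  have one: "1 \<in> {1..N}"
    using N by simp
  have decodes: "h (z1 N g atom_embedding id s r) = f s r" if wf: "wf_mol N s r" for s r
  proof -
    have "f s r = f s (\<lambda>j. if j \<in> {1..N} then g (LE N s r 1) *v (r 1 - r j) else 0)"
      using rigid_invariant_eq_frame_coordinates[of N f s r] f_O3 f_transl wf g_frame[OF wf one]
      by blast
    then show ?thesis
      unfolding h_def decode_z1[OF wf] by simp
  qed
  have average: "(1 / fact N) *\<^sub>R (\<Sum>\<pi>\<in>{\<pi>. \<pi> permutes {1..N}}.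
                   h (z1 N g atom_embedding id (perm_rows \<pi> s) (perm_rows \<pi> r))) = f s r"
    if wf: "wf_mol N s r" for s r
    using decodes wf_mol_perm_rows[OF wf] f_perm[OF wf] by (intro average_over_permutations_const) metis
  show ?thesis
    by (intro exI[of _ atom_embedding] exI[of _ id] exI[of _ h])
       (auto simp: Let_def average wf_mol_perm_rows f_perm simp del: One_nat_def)
qed

end
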